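(* Let $\Sigma$ be a finite alphabet, $n$ a positive integer, $u,v\in\Sigma^\star$, and $r\in R_n(u)\cap R_n(v)$. Let $i_1,i_2\in[1,|u|]$ and $j_1,j_2\in[1,|v|]$ with $\operatorname{ord}(i_1,r(u))\ne\operatorname{ord}(j_1,r(v))$. Then Samson has a winning strategy in the game $\mathrm{FO}^2_n((u,i_1,i_2),(v,j_1,j_2))$.
   Context: Game $\mathrm{FO}^2_n((u,i_1,i_2),(v,j_1,j_2))$: pebble pair $x$ starts on $i_1$ in $u$ and $j_1$ in $v$, pebble pair $y$ on $i_2$ in $u$ and $j_2$ in $v$. In each of $n$ rounds Samson picks $z\in\{x,y\}$ and places one $z$-pebble on a position of one of the words (either one); Delilah places the other $z$-pebble on a position of the other word. Samson wins if initially or after some round the map $x^u\mapsto x^v$, $y^u\mapsto y^v$ is not a partial isomorphism (pebbled letters differ, or $\operatorname{ord}(x^u,y^u)\ne\operatorname{ord}(x^v,y^v)$); otherwise Delilah wins. Boundary positions: $\triangleright_a(w)=\min\{i:w_i=a\}$, $\triangleleft_a(w)=\max\{i:w_i=a\}$, $\triangleright_a(w,q)=\min\{i\in[q+1,|w|]:w_i=a\}$, $\triangleleft_a(w,q)=\max\{i\in[1,q-1]:w_i=a\}$ (undefined if empty). An $n$-ranker is a sequence $r=(p_1,\dots,p_n)$ of boundary positions with $r(w)=p_1(w)$ if $n=1$, undefined if $(p_1,\dots,p_{n-1})(w)$ is undefined, else $p_n(w,(p_1,\dots,p_{n-1})(w))$. $R_n(w)$ is the set of $n$-rankers defined over $w$.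 $\operatorname{ord}(i,j)\in\{<,=,>\}$ is the order type of $i,j$. *)

theory Defs
  imports Main
begin

text \<open>Words are lists; positions are 1-indexed, position i of w carries letter w ! (i - 1).\<close>

definition letter :: "'a list \<Rightarrow> nat \<Rightarrow> 'a" where
  "letter w i = w ! (i - 1)"

definition pos :: "'a list \<Rightarrow> nat set" where
  "pos w = {1..length w}"

datatype ordtype = OLess | OEq | OGreater

definition ord_type :: "nat \<Rightarrow> nat \<Rightarrow> ordtype" where
  "ord_type i j = (if i < j then OLess else if i = j then OEq else OGreater)"

text \<open>Boundary positions: Fst a is the right-pointing triangle (first a / next a),
  Lst a is the left-pointing triangle (last a / previous a).\<close>
datatype 'a bpos = Fst 'a | Lst 'a

definition opt_min :: "nat set \<Rightarrow> nat option" where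
  "opt_min S = (if S = {} then None else Some (Min S))"

definition opt_max :: "nat set \<Rightarrow> nat option" where
  "opt_max S = (if S = {} then None else Some (Max S))"

fun bp_start :: "'a bpos \<Rightarrow> 'a list \<Rightarrow> nat option" where
  "bp_start (Fst a) w = opt_min {i \<in> pos w. letter w i = a}"
| "bp_start (Lst a) w = opt_max {i \<in> pos w. letter w i = a}"

fun bp_from :: "'a bpos \<Rightarrow> 'a list \<Rightarrow> nat \<Rightarrow> nat option" where
  "bp_from (Fst a) w q = opt_min {i \<in> {q+1..length w}. letter w i = a}"
| "bp_from (Lst a) w q = opt_max {i \<in> {1..q-1}. letter w i = a}"

fun ranker_cont :: "'a bpos list \<Rightarrow> 'a list \<Rightarrow> nat option \<Rightarrow> nat option" where
  "ranker_cont [] w q = q"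
| "ranker_cont (p # ps) w None = None"
| "ranker_cont (p # ps) w (Some q) = ranker_cont ps w (bp_from p w q)"

text \<open>r(w) for a ranker r = (p_1,...,p_n), None meaning undefined.\<close>
fun ranker_eval :: "'a bpos list \<Rightarrow> 'a list \<Rightarrow> nat option" where
  "ranker_eval [] w = None"
| "ranker_eval (p # ps) w = ranker_cont ps w (bp_start p w)"

definition rankers :: "nat \<Rightarrow> 'a list \<Rightarrow> 'a bpos list set" where
  "rankers n w = {r. length r = n \<and> ranker_eval r w \<noteq> None}"

definition partial_iso :: "'a list \<Rightarrow> 'a list \<Rightarrow> nat \<Rightarrow> nat \<Rightarrow> nat \<Rightarrow> nat \<Rightarrow> bool" where
  "partial_iso u v i1 i2 j1 j2 \<longleftrightarrow>
     letter u i1 = letter v j1 \<and> letter u i2 = letter v j2 \<and> ord_type i1 i2 = ord_type j1 j2"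

text \<open>A round: Samson chooses pebble x or y and a word, and
  places that pebble on a position of the word; Delilah answers in the other word.\<close>
fun samson_wins :: "nat \<Rightarrow> 'a list \<Rightarrow> 'a list \<Rightarrow> nat \<Rightarrow> nat \<Rightarrow> nat \<Rightarrow> nat \<Rightarrow> bool" where
  "samson_wins 0 u v i1 i2 j1 j2 = (\<not> partial_iso u v i1 i2 j1 j2)"
| "samson_wins (Suc n) u v i1 i2 j1 j2 =
     (\<not> partial_iso u v i1 i2 j1 j2 \<or>
      (\<exists>p\<in>pos u. \<forall>q\<in>pos v. samson_wins n u v p i2 q j2) \<or>
      (\<exists>p\<in>pos u. \<forall>q\<in>pos v. samson_wins n u v i1 p j1 q) \<or>
      (\<exists>q\<in>pos v. \<forall>p\<in>pos u. samson_wins n u v p i2 q j2) \<or>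
      (\<exists>q\<in>pos v. \<forall>p\<in>pos u. samson_wins n u v i1 p j1 q))"

end

theory Submission
  imports Defs
begin

text \<open>
  Induction along the ranker, with the invariant that Samson wins in m rounds as soon as
  pebble x lies on different sides of the reference positions k in u and l in v.
  Suppose the next ranker step moves k and l to the next a-positions s and t, and x lies on
  the same side of k and l but on different sides of s and t, say x beyond s in u and not
  beyond t in v. Samson puts y on s; Delilah must answer with an a-position before x in v,
  and since no a lies strictly between l and t, her answer is at or before l, while s lies
  after k. So y now separates k and l, and the invariant for m rounds applies.
  Previous occurrences are next occurrences in the reversed words, and the game is
  invariant under reversing both words.
\<close>

lemma ord_type_eq_commute: "ord_type b a = ord_type d c \<longleftrightarrow> ord_type a b = ord_type c d"
  unfolding ord_type_def by auto

subsection \<open>Symmetries of the game\<close>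

lemma partial_iso_swap_pebbles: "partial_iso u v i2 i1 j2 j1 = partial_iso u v i1 i2 j1 j2"
  unfolding partial_iso_def using ord_type_eq_commute by auto

lemma partial_iso_swap_words: "partial_iso v u j1 j2 i1 i2 = partial_iso u v i1 i2 j1 j2"
  unfolding partial_iso_def by auto

lemma samson_wins_swap_pebbles: "samson_wins n u v i2 i1 j2 j1 = samson_wins n u v i1 i2 j1 j2"
proof (induction n arbitrary: i1 i2 j1 j2)
  case 0
  then show ?case by (simp add: partial_iso_swap_pebbles)
next
  case (Suc n)
  then show ?case by (simp only: samson_wins.simps partial_iso_swap_pebbles) blast
qed

lemma samson_wins_swap_words: "samson_wins n v u j1 j2 i1 i2 = samson_wins n u v i1 i2 j1 j2"
proof (induction n arbitrary: i1 i2 j1 j2)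
  case 0
  then show ?case by (simp add: partial_iso_swap_words)
next
  case (Suc n)
  then show ?case by (simp only: samson_wins.simps partial_iso_swap_words) blast
qed

lemma samson_wins_if_not_partial_iso:
  "\<not> partial_iso u v i1 i2 j1 j2 \<Longrightarrow> samson_wins n u v i1 i2 j1 j2"
  by (cases n) auto

lemma samson_wins_Suc: "samson_wins n u v i1 i2 j1 j2 \<Longrightarrow> samson_wins (Suc n) u v i1 i2 j1 j2"
proof (induction n arbitrary: i1 i2 j1 j2)
  case 0
  then show ?case by simp
next
  case (Suc n)
  from Suc.prems show ?case
    by (simp only: samson_wins.simps) (meson Suc.IH)
qed

definition rev_pos :: "'a list \<Rightarrow> nat \<Rightarrow> nat" where
  "rev_pos w i = length w + 1 - i"

lemma pos_rev: "pos (rev w) = rev_pos w ` pos w"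
proof -
  have "i \<in> rev_pos w ` pos w" if "i \<in> pos (rev w)" for i
  proof (rule image_eqI)
    show "i = rev_pos w (rev_pos w i)" "rev_pos w i \<in> pos w"
      using that by (auto simp: pos_def rev_pos_def)
  qed
  then show ?thesis by (auto simp: pos_def rev_pos_def)
qed

lemma pos_le_Suc_length: "i \<in> pos w \<Longrightarrow> i \<le> length w + 1"
  by (simp add: pos_def)

lemma letter_rev: "i \<in> pos w \<Longrightarrow> letter (rev w) (rev_pos w i) = letter w i"
  by (auto simp: letter_def pos_def rev_pos_def rev_nth Suc_diff_le)

lemma ord_type_rev_pos:
  "i \<le> length w + 1 \<Longrightarrow> j \<le> length w + 1 \<Longrightarrow> ord_type (rev_pos w i) (rev_pos w j) = ord_type j i"
  unfolding ord_type_def rev_pos_def by auto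

lemma partial_iso_rev:
  assumes "i1 \<in> pos u" "i2 \<in> pos u" "j1 \<in> pos v" "j2 \<in> pos v"
  shows "partial_iso (rev u) (rev v) (rev_pos u i1) (rev_pos u i2) (rev_pos v j1) (rev_pos v j2)
    = partial_iso u v i1 i2 j1 j2"
  using assms by (simp add: partial_iso_def letter_rev ord_type_rev_pos ord_type_eq_commute pos_def)

lemma samson_wins_rev:
  assumes "i1 \<in> pos u" "i2 \<in> pos u" "j1 \<in> pos v" "j2 \<in> pos v"
  shows "samson_wins n (rev u) (rev v) (rev_pos u i1) (rev_pos u i2) (rev_pos v j1) (rev_pos v j2)
    = samson_wins n u v i1 i2 j1 j2"
  using assms
proof (induction n arbitrary: i1 i2 j1 j2)
  case 0
  then show ?case by (simp add: partial_iso_rev)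
next
  case (Suc n)
  then show ?case by (simp add: partial_iso_rev pos_rev)
qed

subsection \<open>The induction invariant\<close>

definition wins_when_ord_differs :: "nat \<Rightarrow> 'a list \<Rightarrow> 'a list \<Rightarrow> nat \<Rightarrow> nat \<Rightarrow> bool" where
  "wins_when_ord_differs m u v k l \<longleftrightarrow>
     (\<forall>i1\<in>pos u. \<forall>j1\<in>pos v. ord_type i1 k \<noteq> ord_type j1 l \<longrightarrow>
        (\<forall>i2\<in>pos u. \<forall>j2\<in>pos v. samson_wins m u v i1 i2 j1 j2))"

lemma wins_when_ord_differs_swap_words:
  "wins_when_ord_differs m v u l k = wins_when_ord_differs m u v k l"
  unfolding wins_when_ord_differs_def by (auto simp: samson_wins_swap_words)

lemma wins_when_ord_differs_rev:
  assumes "k \<le> length u + 1" "l \<le> length v + 1"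
  shows "wins_when_ord_differs m (rev u) (rev v) (rev_pos u k) (rev_pos v l)
    = wins_when_ord_differs m u v k l"
proof -
  have "ord_type (rev_pos u i) (rev_pos u k) = ord_type (rev_pos v j) (rev_pos v l)
      \<longleftrightarrow> ord_type i k = ord_type j l" if "i \<in> pos u" "j \<in> pos v" for i j
    using that assms by (metis ord_type_rev_pos pos_le_Suc_length ord_type_eq_commute)
  then show ?thesis
    unfolding wins_when_ord_differs_def by (simp add: pos_rev samson_wins_rev)
qed

definition next_occ :: "'a list \<Rightarrow> 'a \<Rightarrow> nat \<Rightarrow> nat \<Rightarrow> bool" where
  "next_occ w a k s \<longleftrightarrow>
     s \<in> pos w \<and> k < s \<and> letter w s = a \<and> (\<forall>i\<in>pos w. k < i \<and> i < s \<longrightarrow> letter w i \<noteq> a)"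

lemma wins_when_ord_differs_next_occ_beyond:
  assumes win: "wins_when_ord_differs m u v k l"
    and s: "next_occ u a k s" and t: "next_occ v a l t"
    and pos: "i1 \<in> pos u" "i2 \<in> pos u" "j1 \<in> pos v" "j2 \<in> pos v"
    and beyond: "s \<le> i1" "j1 \<le> t" "(i1, j1) \<noteq> (s, t)"
    and same_side: "ord_type i1 k = ord_type j1 l"
  shows "samson_wins (Suc m) u v i1 i2 j1 j2"
proof (cases "partial_iso u v i1 i2 j1 j2")
  case False
  then show ?thesis by simp
next
  case iso: True
  have "l < j1"
    using s beyond(1) same_side by (auto simp: next_occ_def ord_type_def split: if_splits)
  show ?thesis
  proof (cases "i1 = s")
    case True
    with \<open>l < j1\<close> beyond t pos have "letter v j1 \<noteq> a" by (auto simp: next_occ_def)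
    with True s iso show ?thesis by (simp add: next_occ_def partial_iso_def)
  next
    case False
    have "samson_wins m u v i1 s j1 q" if q: "q \<in> pos v" for q
    proof (cases "partial_iso u v i1 s j1 q")
      case False
      then show ?thesis by (rule samson_wins_if_not_partial_iso)
    next
      case True
      with s False beyond have "letter v q = a" "q < j1"
        by (auto simp: next_occ_def partial_iso_def ord_type_def split: if_splits)
      with t q beyond have "q \<le> l" by (force simp: next_occ_def)
      with s have "ord_type s k \<noteq> ord_type q l" by (auto simp: next_occ_def ord_type_def)
      with win s q pos show ?thesis
        by (auto simp: wins_when_ord_differs_def next_occ_def samson_wins_swap_pebbles[symmetric])
    qed
    with s have "\<exists>p\<in>pos u. \<forall>q\<in>pos v. samson_wins m u v i1 p j1 q"
      by (auto simp: next_occ_def)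
    then show ?thesis by simp
  qed
qed

lemma wins_when_ord_differs_next_occ:
  assumes win: "wins_when_ord_differs m u v k l"
    and s: "next_occ u a k s" and t: "next_occ v a l t"
  shows "wins_when_ord_differs (Suc m) u v s t"
  unfolding wins_when_ord_differs_def
proof (intro ballI impI)
  fix i1 j1 i2 j2
  assume pos: "i1 \<in> pos u" "j1 \<in> pos v" "i2 \<in> pos u" "j2 \<in> pos v"
    and differs: "ord_type i1 s \<noteq> ord_type j1 t"
  show "samson_wins (Suc m) u v i1 i2 j1 j2"
  proof (cases "ord_type i1 k = ord_type j1 l")
    case False
    with win pos show ?thesis by (auto simp: wins_when_ord_differs_def intro: samson_wins_Suc)
  next
    case same_side: True
    from differs consider "s \<le> i1" "j1 \<le> t" "(i1, j1) \<noteq> (s, t)"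
      | "t \<le> j1" "i1 \<le> s" "(j1, i1) \<noteq> (t, s)"
      by (auto simp: ord_type_def split: if_splits)
    then show ?thesis
    proof cases
      case 1
      with wins_when_ord_differs_next_occ_beyond[OF win s t] pos same_side show ?thesis by blast
    next
      case 2
      from win have "wins_when_ord_differs m v u l k" by (simp add: wins_when_ord_differs_swap_words)
      from wins_when_ord_differs_next_occ_beyond[OF this t s] 2 pos same_side
      show ?thesis by (simp add: samson_wins_swap_words)
    qed
  qed
qed

subsection \<open>Boundary positions\<close>

lemma opt_min_interval_eq_Some_iff:
  "opt_min {i \<in> {a..b::nat}. P i} = Some s \<longleftrightarrow> s \<in> {a..b} \<and> P s \<and> (\<forall>i\<in>{a..b}. P i \<longrightarrow> s \<le> i)"
  unfolding opt_min_def by (auto simp: Min_eq_iff)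

lemma opt_max_interval_eq_Some_iff:
  "opt_max {i \<in> {a..b::nat}. P i} = Some s \<longleftrightarrow> s \<in> {a..b} \<and> P s \<and> (\<forall>i\<in>{a..b}. P i \<longrightarrow> i \<le> s)"
  unfolding opt_max_def by (auto simp: Max_eq_iff)

lemma next_occ_bp_from_Fst: "bp_from (Fst a) w k = Some s \<Longrightarrow> next_occ w a k s"
  unfolding bp_from.simps opt_min_interval_eq_Some_iff next_occ_def pos_def by force

lemma bp_from_Lst_in_pos:
  "k \<le> length w + 1 \<Longrightarrow> bp_from (Lst a) w k = Some s \<Longrightarrow> s \<in> pos w"
  unfolding bp_from.simps opt_max_interval_eq_Some_iff pos_def by auto

lemma next_occ_rev_bp_from_Lst:
  assumes k: "k \<le> length w + 1" and s: "bp_from (Lst a) w k = Some s"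
  shows "next_occ (rev w) a (rev_pos w k) (rev_pos w s)"
proof -
  have s_last: "s \<in> {1..k-1}" "letter w s = a" "\<forall>i\<in>{1..k-1}. letter w i = a \<longrightarrow> i \<le> s"
    using s unfolding bp_from.simps opt_max_interval_eq_Some_iff by blast+
  have s_pos: "s \<in> pos w" using bp_from_Lst_in_pos[OF k s] .
  have "rev_pos w s \<in> pos (rev w)"
    using s_pos by (simp add: pos_rev)
  moreover have "rev_pos w k < rev_pos w s"
    using s_last(1) k by (auto simp: rev_pos_def)
  moreover have "letter (rev w) (rev_pos w s) = a"
    using s_pos s_last(2) by (simp add: letter_rev)
  moreover have "letter (rev w) i' \<noteq> a"
    if "i' \<in> pos (rev w)" "rev_pos w k < i'" "i' < rev_pos w s" for i'
  proof -
    from that(1) obtain i where i: "i \<in> pos w" "i' = rev_pos w i" by (auto simp: pos_rev)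
    with that(2,3) k s_pos have "s < i" "i < k" by (auto simp: rev_pos_def pos_def)
    with i(1) s_last(1,3) have "letter w i \<noteq> a" by (auto simp: pos_def)
    with i show ?thesis by (simp add: letter_rev)
  qed
  ultimately show ?thesis unfolding next_occ_def by blast
qed

lemma bp_from_in_pos:
  assumes "k \<le> length w + 1" "bp_from p w k = Some s"
  shows "s \<in> pos w"
proof (cases p)
  case (Fst a)
  with assms(2) have "next_occ w a k s" by (simp only: next_occ_bp_from_Fst)
  then show ?thesis by (simp add: next_occ_def)
next
  case (Lst a)
  with assms show ?thesis by (simp only: bp_from_Lst_in_pos)
qed

lemma wins_when_ord_differs_bp_from:
  assumes win: "wins_when_ord_differs m u v k l"
    and kl: "k \<le> length u + 1" "l \<le> length v + 1"
    and s: "bp_from p u k = Some s" and t: "bp_from p v l = Some t"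
  shows "wins_when_ord_differs (Suc m) u v s t"
proof (cases p)
  case (Fst a)
  with s t have "next_occ u a k s" "next_occ v a l t" by (simp_all only: next_occ_bp_from_Fst)
  with win show ?thesis by (rule wins_when_ord_differs_next_occ)
next
  case (Lst a)
  have "wins_when_ord_differs m (rev u) (rev v) (rev_pos u k) (rev_pos v l)"
    using win kl by (simp add: wins_when_ord_differs_rev)
  moreover have "next_occ (rev u) a (rev_pos u k) (rev_pos u s)"
    using kl(1) s Lst by (simp only: next_occ_rev_bp_from_Lst)
  moreover have "next_occ (rev v) a (rev_pos v l) (rev_pos v t)"
    using kl(2) t Lst by (simp only: next_occ_rev_bp_from_Lst)
  ultimately
  have "wins_when_ord_differs (Suc m) (rev u) (rev v) (rev_pos u s) (rev_pos v t)"
    by (rule wins_when_ord_differs_next_occ)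
  moreover have "s \<le> length u + 1" "t \<le> length v + 1"
    using bp_from_in_pos[OF kl(1) s] bp_from_in_pos[OF kl(2) t] by (simp_all add: pos_def)
  ultimately show ?thesis by (simp add: wins_when_ord_differs_rev)
qed

subsection \<open>Rankers\<close>

definition start_point :: "'a bpos \<Rightarrow> 'a list \<Rightarrow> nat" where
  "start_point p w = (case p of Fst _ \<Rightarrow> 0 | Lst _ \<Rightarrow> length w + 1)"

lemma bp_start_eq_bp_from_start_point: "bp_start p w = bp_from p w (start_point p w)"
  by (cases p) (simp_all add: start_point_def pos_def)

lemma start_point_le: "start_point p w \<le> length w + 1"
  by (cases p) (simp_all add: start_point_def)

lemma wins_when_ord_differs_start_point:
  "wins_when_ord_differs 0 u v (start_point p u) (start_point p v)"
  by (cases p) (auto simp: wins_when_ord_differs_def start_point_def ord_type_def pos_def)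

lemma ranker_cont_None [simp]: "ranker_cont ps w None = None"
  by (cases ps) simp_all

lemma wins_when_ord_differs_ranker_cont:
  assumes "wins_when_ord_differs m u v k l" "k \<le> length u + 1" "l \<le> length v + 1"
    and "ranker_cont ps u (Some k) = Some k'" "ranker_cont ps v (Some l) = Some l'"
  shows "wins_when_ord_differs (m + length ps) u v k' l'"
  using assms
proof (induction ps arbitrary: m k l)
  case Nil
  then show ?case by simp
next
  case (Cons p ps)
  obtain s where s: "bp_from p u k = Some s"
    using Cons.prems(4) by (cases "bp_from p u k") simp_all
  obtain t where t: "bp_from p v l = Some t"
    using Cons.prems(5) by (cases "bp_from p v l") simp_all
  have "wins_when_ord_differs (Suc m) u v s t"
    using wins_when_ord_differs_bp_from[OF Cons.prems(1-3) s t] .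
  moreover have "s \<le> length u + 1" "t \<le> length v + 1"
    using bp_from_in_pos[OF Cons.prems(2) s] bp_from_in_pos[OF Cons.prems(3) t]
    by (simp_all add: pos_def)
  moreover have "ranker_cont ps u (Some s) = Some k'" "ranker_cont ps v (Some t) = Some l'"
    using Cons.prems(4,5) s t by simp_all
  ultimately have "wins_when_ord_differs (Suc m + length ps) u v k' l'"
    by (rule Cons.IH)
  then show ?case by simp
qed

lemma wins_when_ord_differs_ranker_eval:
  assumes "ranker_eval r u = Some k" "ranker_eval r v = Some l"
  shows "wins_when_ord_differs (length r) u v k l"
proof (cases r)
  case Nil
  with assms show ?thesis by simp
next
  case (Cons p ps)
  with assms obtain k0 l0 where k0: "bp_start p u = Some k0" and l0: "bp_start p v = Some l0"
    by (cases "bp_start p u"; cases "bp_start p v") auto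
  have "wins_when_ord_differs (Suc 0) u v k0 l0"
    using wins_when_ord_differs_bp_from[OF wins_when_ord_differs_start_point start_point_le
        start_point_le] k0 l0
    by (simp add: bp_start_eq_bp_from_start_point)
  moreover have "k0 \<le> length u + 1" "l0 \<le> length v + 1"
    using bp_from_in_pos[OF start_point_le] k0 l0
    by (fastforce simp: bp_start_eq_bp_from_start_point pos_def)+
  ultimately show ?thesis
    using wins_when_ord_differs_ranker_cont[of "Suc 0" u v k0 l0 ps k l] assms Cons k0 l0 by simp
qed

theorem lemma3p5:
  fixes u v :: "'a::finite list" and n :: nat and r :: "'a bpos list"
    and i1 i2 j1 j2 :: nat
  assumes "n \<ge> 1"
    and "r \<in> rankers n u \<inter> rankers n v"
    and "i1 \<in> pos u" and "i2 \<in> pos u" and "j1 \<in> pos v" and "j2 \<in> pos v"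
    and "ord_type i1 (the (ranker_eval r u)) \<noteq> ord_type j1 (the (ranker_eval r v))"
  shows "samson_wins n u v i1 i2 j1 j2"
proof -
  from assms(2) obtain k l where "length r = n"
    and k: "ranker_eval r u = Some k" and l: "ranker_eval r v = Some l"
    unfolding rankers_def by auto
  then have "wins_when_ord_differs n u v k l"
    using wins_when_ord_differs_ranker_eval by blast
  with assms(3-7) k l show ?thesis
    unfolding wins_when_ord_differs_def by simp
qed

end
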